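(* Let $M$ be a finite set. For any $\bar{\mathcal{F}}\subseteq\{f:M\to\mathbb{R}\}$ there exists a finite $\mathcal{F}\subseteq\{f:M\to\mathbb{R}\}$ such that $q(M,\eta,\mathcal{F})=q(M,\eta,\bar{\mathcal{F}})$ for every $\eta\in\Delta M$.
   Context: For $\eta\in\Delta M$ and $\mathcal{F}\subseteq\{f:M\to\mathbb{R}\}$, $q(M,\eta,\mathcal{F})$ denotes the unique maximizer of the Shannon entropy $-\sum_mq_m\log q_m$ (with $0\log0=0$) over $\{q\in\Delta M:\sum_mq_mf(m)=\sum_m\eta_mf(m)\ \forall f\in\mathcal{F}\}$. *)

theory Defs
  imports Complex_Main
begin

definition simplex :: "'a set \<Rightarrow> ('a \<Rightarrow> real) set" where
  "simplex M = {q. (\<forall>m\<in>M. 0 \<le> q m) \<and> (\<forall>m. m \<notin> M \<longrightarrow> q m = 0) \<and> (\<Sum>m\<in>M. q m) = 1}"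

text \<open>Shannon entropy (note ln 0 = 0 in Isabelle, so 0 log 0 = 0).\<close>
definition entropy :: "'a set \<Rightarrow> ('a \<Rightarrow> real) \<Rightarrow> real" where
  "entropy M q = - (\<Sum>m\<in>M. q m * ln (q m))"

definition moment_set :: "'a set \<Rightarrow> ('a \<Rightarrow> real) \<Rightarrow> ('a \<Rightarrow> real) set \<Rightarrow> ('a \<Rightarrow> real) set" where
  "moment_set M \<eta> F = {q \<in> simplex M. \<forall>f\<in>F. (\<Sum>m\<in>M. q m * f m) = (\<Sum>m\<in>M. \<eta> m * f m)}"

definition maxent :: "'a set \<Rightarrow> ('a \<Rightarrow> real) \<Rightarrow> ('a \<Rightarrow> real) set \<Rightarrow> ('a \<Rightarrow> real)" where
  "maxent M \<eta> F = (THE q. q \<in> moment_set M \<eta> F \<and>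
      (\<forall>q'\<in>moment_set M \<eta> F. entropy M q' \<le> entropy M q))"

end

theory Submission
  imports Defs "HOL-Library.Function_Algebras" "HOL-Library.Indicator_Function"
begin

text \<open>The maximiser depends on the constraint family only through its moment set.  The
  constraints only see the restrictions of the constraint functions to \<open>M\<close> and are linear in
  them, so they depend only on the span of those restrictions.  This span lies in the
  finite-dimensional space spanned by the point indicators of \<open>M\<close>, so finitely many
  restrictions already span it.\<close>

instantiation "fun" :: (type, real_vector) real_vector
begin

definition scaleR_fun :: "real \<Rightarrow> ('a \<Rightarrow> 'b) \<Rightarrow> 'a \<Rightarrow> 'b" where
  "scaleR_fun c f = (\<lambda>x. c *\<^sub>R f x)"

instance
  by standard (simp_all add: scaleR_fun_def fun_eq_iff scaleR_add_right scaleR_add_left)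

end

lemma scaleR_fun_apply [simp]: "(c *\<^sub>R f) x = c *\<^sub>R f x"
  by (simp add: scaleR_fun_def)

lemma sum_fun_apply: "sum f A x = (\<Sum>a\<in>A. f a x)"
  by (induction A rule: infinite_finite_induct) auto

lemma finite_spanning_subset:
  fixes G :: "'a::real_vector set"
  assumes "finite T" and "G \<subseteq> span T"
  shows "\<exists>B\<subseteq>G. finite B \<and> span B = span G"
proof -
  obtain B where B: "B \<subseteq> G" "independent B" "G \<subseteq> span B"
    using maximal_independent_subset by blast
  have "finite B"
    using independent_span_bound[OF assms(1) B(2)] B(1) assms(2) by blast
  moreover have "span B = span G"
    using B(1,3) by (simp add: span_eq span_superset subset_trans)
  ultimately show ?thesis
    using B(1) by blast
qed

definition zero_outside :: "'a set \<Rightarrow> ('a \<Rightarrow> 'b::zero) \<Rightarrow> 'a \<Rightarrow> 'b" where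
  "zero_outside M f x = (if x \<in> M then f x else 0)"

lemma zero_outside_in_span_indicators:
  fixes f :: "'a \<Rightarrow> real"
  assumes "finite M"
  shows "zero_outside M f \<in> span ((\<lambda>m. indicator {m}) ` M)"
proof -
  have "zero_outside M f = (\<Sum>m\<in>M. f m *\<^sub>R indicator {m})"
    using assms by (simp add: fun_eq_iff sum_fun_apply indicator_def zero_outside_def)
  also have "\<dots> \<in> span ((\<lambda>m. indicator {m}) ` M)"
    by (intro span_sum span_scale span_base) auto
  finally show ?thesis .
qed

lemma moment_set_zero_outside:
  "moment_set M \<eta> (zero_outside M ` F) = moment_set M \<eta> F"
proof -
  have sum_zero_outside: "(\<Sum>m\<in>M. q m * zero_outside M f m) = (\<Sum>m\<in>M. q m * f m)" for q f
    by (rule sum.cong) (auto simp: zero_outside_def)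
  show ?thesis
    by (simp add: moment_set_def sum_zero_outside)
qed

lemma moments_agree_on_span:
  fixes q \<eta> :: "'a \<Rightarrow> real"
  assumes "\<forall>f\<in>F. (\<Sum>m\<in>M. q m * f m) = (\<Sum>m\<in>M. \<eta> m * f m)" and "g \<in> span F"
  shows "(\<Sum>m\<in>M. q m * g m) = (\<Sum>m\<in>M. \<eta> m * g m)"
proof -
  define L where "L f = (\<Sum>m\<in>M. q m * f m) - (\<Sum>m\<in>M. \<eta> m * f m)" for f :: "'a \<Rightarrow> real"
  have "linear L"
    by (rule linearI) (simp_all add: L_def algebra_simps sum.distrib sum_distrib_left)
  moreover have "L f = 0" if "f \<in> F" for f
    using assms(1) that by (simp add: L_def)
  ultimately have "L g = 0"
    using assms(2) by (rule real_vector.linear_eq_0_on_span)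
  then show ?thesis
    by (simp add: L_def)
qed

lemma moment_set_span: "moment_set M \<eta> (span F) = moment_set M \<eta> F"
proof
  show "moment_set M \<eta> (span F) \<subseteq> moment_set M \<eta> F"
    unfolding moment_set_def using span_superset by blast
  show "moment_set M \<eta> F \<subseteq> moment_set M \<eta> (span F)"
    unfolding moment_set_def using moments_agree_on_span by blast
qed

lemma maxent_moment_set_cong:
  "moment_set M \<eta> F = moment_set M \<eta> G \<Longrightarrow> maxent M \<eta> F = maxent M \<eta> G"
  by (simp add: maxent_def)

theorem lemma3:
  fixes M :: "'a set" and Fbar :: "('a \<Rightarrow> real) set"
  assumes "finite M"
  shows "\<exists>F :: ('a \<Rightarrow> real) set. finite F \<and>
           (\<forall>\<eta>\<in>simplex M. maxent M \<eta> F = maxent M \<eta> Fbar)"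
proof -
  have "zero_outside M ` Fbar \<subseteq> span ((\<lambda>m. indicator {m}) ` M)"
    using zero_outside_in_span_indicators[OF assms] by blast
  then obtain F where "finite F" and span_F: "span F = span (zero_outside M ` Fbar)"
    using finite_spanning_subset assms by (metis finite_imageI)
  have "moment_set M \<eta> F = moment_set M \<eta> Fbar" for \<eta>
  proof -
    have "moment_set M \<eta> F = moment_set M \<eta> (span F)"
      by (rule moment_set_span[symmetric])
    also have "\<dots> = moment_set M \<eta> (span (zero_outside M ` Fbar))"
      by (simp only: span_F)
    also have "\<dots> = moment_set M \<eta> (zero_outside M ` Fbar)"
      by (rule moment_set_span)
    also have "\<dots> = moment_set M \<eta> Fbar"
      by (rule moment_set_zero_outside)
    finally show ?thesis .
  qed
  with \<open>finite F\<close> show ?thesis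
    by (auto intro: maxent_moment_set_cong)
qed

end
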